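(* Let $s\in\{0,\tfrac12\}$ and $\lambda\in\mathbb{C}$, and let $\mathfrak{L}=\mathfrak{L}^s_\lambda$. Then the space of all superderivations of $\mathfrak{L}$ decomposes as $$\mathrm{Der}(\mathfrak{L})=\mathrm{Inn}(\mathfrak{L})\oplus\mathbb{C}\,\partial_G\oplus\delta_{\lambda,0}\,\mathbb{C}\,\partial_D ,$$ where $\delta_{\lambda,0}\mathbb{C}\partial_D$ denotes $\mathbb{C}\partial_D$ if $\lambda=0$ and $\{0\}$ if $\lambda\neq0$. (In the paper, $\partial_G$ is called $\partial_2$ for $s=0$ and $\partial_4$ for $s=\tfrac12$; $\partial_D$ is called $\partial_1$ for $s=0$ and $\partial_3$ for $s=\tfrac12$.)
   Context: Fix $s\in\{0,\tfrac12\}$ and $\lambda\in\mathbb{C}$. The deformative super $W$-algebra $\mathfrak{L}=\mathfrak{L}^s_\lambda=W^s_\lambda(2,2)$ is the complex Lie superalgebra with basis $\{L_m,I_m,G_p,H_p : m\in\mathbb{Z},\ p\in s+\mathbb{Z}\}$, even part $\mathfrak{L}_{\bar0}=\mathrm{span}\{L_m,I_m\}$, odd part $\mathfrak{L}_{\bar1}=\mathrm{span}\{G_p,H_p\}$, and brackets of basis elements given by $[L_m,L_n]=(m-n)L_{m+n}$, $[L_m,I_n]=(m-n)I_{m+n}$, $[L_m,H_p]=(\tfrac m2-p)H_{m+p}$, $[L_m,G_p]=(\tfrac m2-p)G_{m+p}+\lambda(m+1)H_{m+p}$, $[I_m,G_p]=(m-2p)H_{m+p}$, $[G_p,G_q]=I_{p+q}$,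 together with those obtained by super-antisymmetry $[y,x]=-(-1)^{|x||y|}[x,y]$; all other brackets of basis elements vanish (e.g. $[I_m,I_n]=[I_m,H_p]=[G_p,H_q]=[H_p,H_q]=0$). For homogeneous $x$, $|x|\in\mathbb{Z}_2$ denotes its parity. A superderivation of parity $a\in\mathbb{Z}_2$ is a linear map $D:\mathfrak{L}\to\mathfrak{L}$ with $D(\mathfrak{L}_{b})\subset\mathfrak{L}_{a+b}$ and $D([x,y])=[D(x),y]+(-1)^{a|x|}[x,D(y)]$ for homogeneous $x,y$; $\mathrm{Der}(\mathfrak{L})=\mathrm{Der}_{\bar0}(\mathfrak{L})\oplus\mathrm{Der}_{\bar1}(\mathfrak{L})$ is the space of sums of an even and an odd superderivation. $\mathrm{Inn}(\mathfrak{L})=\{\mathrm{ad}\,x: x\in\mathfrak{L}\}$, where $\mathrm{ad}\,x(y)=[x,y]$ (extended linearly from homogeneous $x$). The linear maps $\partial_G$ and $\partial_D$ are defined by: $\partial_G(L_m)=\partial_G(I_m)=\partial_G(H_p)=0$, $\partial_G(G_p)=H_p$; and $\partial_D(L_m)=0$, $\partial_D(I_m)=2I_m$, $\partial_D(G_p)=G_p$, $\partial_D(H_p)=3H_p$ (for all $m\in\mathbb{Z}$, $p\in s+\mathbb{Z}$). *)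

theory Defs
  imports Complex_Main "HOL-Library.Function_Algebras"
begin

text \<open>Basis of the deformative super W-algebra W^s_lambda(2,2).
  L m, I m (m integer) are even; G k, H k stand for G_p, H_p with p = k + s.\<close>
datatype bas = L int | I int | G int | H int

fun par :: "bas \<Rightarrow> bool" where
  "par (L _) = False" | "par (I _) = False" | "par (G _) = True" | "par (H _) = True"

type_synonym vec = "bas \<Rightarrow> complex"

definition supp :: "vec \<Rightarrow> bas set" where "supp v = {b. v b \<noteq> 0}"

definition V :: "vec set" where "V = {v. finite (supp v)}"

definition bv :: "bas \<Rightarrow> vec" where "bv b = (\<lambda>c. if c = b then 1 else 0)"

definition smul :: "complex \<Rightarrow> vec \<Rightarrow> vec" where "smul a v = (\<lambda>b. a * v b)"

definition pv :: "real \<Rightarrow> int \<Rightarrow> complex" where "pv s k = of_int k + complex_of_real s"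
definition tws :: "real \<Rightarrow> int" where "tws s = \<lfloor>2 * s\<rfloor>"

fun br :: "real \<Rightarrow> complex \<Rightarrow> bas \<Rightarrow> bas \<Rightarrow> vec" where
  "br s la (L m) (L n) = smul (of_int (m - n)) (bv (L (m + n)))"
| "br s la (L m) (I n) = smul (of_int (m - n)) (bv (I (m + n)))"
| "br s la (I n) (L m) = smul (- of_int (m - n)) (bv (I (m + n)))"
| "br s la (L m) (H k) = smul (of_int m / 2 - pv s k) (bv (H (m + k)))"
| "br s la (H k) (L m) = smul (- (of_int m / 2 - pv s k)) (bv (H (m + k)))"
| "br s la (L m) (G k) = smul (of_int m / 2 - pv s k) (bv (G (m + k)))
                         + smul (la * (of_int m + 1)) (bv (H (m + k)))"
| "br s la (G k) (L m) = smul (- (of_int m / 2 - pv s k)) (bv (G (m + k)))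
                         + smul (- (la * (of_int m + 1))) (bv (H (m + k)))"
| "br s la (I m) (G k) = smul (of_int m - 2 * pv s k) (bv (H (m + k)))"
| "br s la (G k) (I m) = smul (- (of_int m - 2 * pv s k)) (bv (H (m + k)))"
| "br s la (G k) (G l) = bv (I (k + l + tws s))"
| "br s la _ _ = 0"

definition brk :: "real \<Rightarrow> complex \<Rightarrow> vec \<Rightarrow> vec \<Rightarrow> vec" where
  "brk s la x y = (\<lambda>c. \<Sum>b1\<in>supp x. \<Sum>b2\<in>supp y. x b1 * y b2 * br s la b1 b2 c)"

definition hom :: "bool \<Rightarrow> vec \<Rightarrow> bool" where
  "hom p x \<longleftrightarrow> x \<in> V \<and> (\<forall>b. x b \<noteq> 0 \<longrightarrow> par b = p)"

definition superder :: "real \<Rightarrow> complex \<Rightarrow> bool \<Rightarrow> (vec \<Rightarrow> vec) \<Rightarrow> bool" where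
  "superder s la a D \<longleftrightarrow>
     (\<forall>x\<in>V. \<forall>y\<in>V. D (x + y) = D x + D y) \<and>
     (\<forall>c. \<forall>x\<in>V. D (smul c x) = smul c (D x)) \<and>
     (\<forall>p x. hom p x \<longrightarrow> hom (a \<noteq> p) (D x)) \<and>
     (\<forall>p q x y. hom p x \<longrightarrow> hom q y \<longrightarrow>
        D (brk s la x y) = brk s la (D x) y + smul (if a \<and> p then -1 else 1) (brk s la x (D y)))"

definition is_der :: "real \<Rightarrow> complex \<Rightarrow> (vec \<Rightarrow> vec) \<Rightarrow> bool" where
  "is_der s la D \<longleftrightarrow> (\<exists>D0 D1. superder s la False D0 \<and> superder s la True D1 \<and>
                          (\<forall>v\<in>V. D v = D0 v + D1 v))"

definition ad :: "real \<Rightarrow> complex \<Rightarrow> vec \<Rightarrow> vec \<Rightarrow> vec" where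
  "ad s la x = brk s la x"

definition dG :: "vec \<Rightarrow> vec" where
  "dG v = (\<lambda>b. case b of H k \<Rightarrow> v (G k) | _ \<Rightarrow> 0)"

definition dD :: "vec \<Rightarrow> vec" where
  "dD v = (\<lambda>b. case b of L m \<Rightarrow> 0 | I m \<Rightarrow> 2 * v b | G k \<Rightarrow> v b | H k \<Rightarrow> 3 * v b)"

end

theory Submission
  imports Defs
begin

text \<open>Grade the algebra by the eigenvalues of \<open>-ad L\<^sub>0\<close>. Subtracting an inner derivation makes
  \<open>D L\<^sub>0\<close> homogeneous of degree 0, and then \<open>D [b, L\<^sub>0] = [D b, L\<^sub>0] \<plusminus> [b, D L\<^sub>0]\<close> forces \<open>D\<close> to
  preserve degrees. A second inner correction makes \<open>D\<close> vanish on \<open>L\<^sub>0\<close> and \<open>L\<^sub>1\<close>, hence on the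
  whole Virasoro part. What is left maps each basis vector into its own weight space, and the relations
  \<open>[L\<^sub>m, \<cdot>]\<close>, \<open>[I\<^sub>m, \<cdot>]\<close> and \<open>[G\<^sub>p, G\<^sub>p] = I\<^sub>2\<^sub>p\<close> force it to be a combination of \<open>\<partial>\<^sub>G\<close> and \<open>\<partial>\<^sub>D\<close>, with
  \<open>\<partial>\<^sub>D\<close> excluded when \<open>\<lambda> \<noteq> 0\<close>, if \<open>D\<close> is even, and to vanish if \<open>D\<close> is odd (for \<open>s = 1/2\<close> at once,
  since then odd elements have odd degree and even elements even degree). The outer derivations
  are independent modulo inner ones because only \<open>0\<close> commutes with all \<open>L\<^sub>m\<close>.\<close>

declare plus_fun_apply[simp del] zero_fun_apply[simp del] minus_apply[simp del] uminus_apply[simp del]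

lemma sum_fun_apply: "(sum f A) c = sum (\<lambda>a. f a c) A"
  by (induction A rule: infinite_finite_induct) (auto simp: plus_fun_apply zero_fun_apply)

lemma smul_apply: "smul a v c = a * v c" by (simp add: smul_def)
lemma bv_apply: "bv b c = (if c = b then 1 else 0)" by (simp add: bv_def)

lemmas vec_simps = smul_apply plus_fun_apply zero_fun_apply minus_apply uminus_apply
lemmas coeff_simps = vec_simps bv_apply

lemma in_V: "x \<in> V \<longleftrightarrow> finite {b. x b \<noteq> 0}" by (simp add: V_def supp_def)
lemma in_supp[simp]: "b \<in> supp x \<longleftrightarrow> x b \<noteq> 0" by (simp add: supp_def)
lemma finite_supp: "x \<in> V \<Longrightarrow> finite (supp x)" by (simp add: V_def)

lemma zero_V[simp]: "0 \<in> V" by (simp add: in_V vec_simps)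
lemma bv_V[simp]: "bv b \<in> V" by (simp add: in_V bv_def)
lemma add_V[simp]: "x \<in> V \<Longrightarrow> y \<in> V \<Longrightarrow> x + y \<in> V"
  unfolding in_V by (rule finite_subset[of _ "{b. x b \<noteq> 0} \<union> {b. y b \<noteq> 0}"]) (auto simp: vec_simps)
lemma smul_V[simp]: "x \<in> V \<Longrightarrow> smul a x \<in> V"
  unfolding in_V by (rule finite_subset[of _ "{b. x b \<noteq> 0}"]) (auto simp: smul_apply)
lemma sum_V[simp]: "(\<And>a. a \<in> A \<Longrightarrow> f a \<in> V) \<Longrightarrow> sum f A \<in> V"
  by (induction A rule: infinite_finite_induct) auto

lemma smul_add: "smul a (x + y) = smul a x + smul a y" by (rule ext) (simp add: vec_simps algebra_simps)
lemma smul_smul[simp]: "smul a (smul b x) = smul (a * b) x" by (rule ext) (simp add: vec_simps)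
lemma smul_zero[simp]: "smul a 0 = 0" by (rule ext) (simp add: vec_simps)
lemma smul_one[simp]: "smul 1 x = x" by (rule ext) (simp add: vec_simps)
lemma smul_zero_left[simp]: "smul 0 x = 0" by (rule ext) (simp add: vec_simps)
lemma smul_sum: "smul a (sum f A) = (\<Sum>i\<in>A. smul a (f i))"
  by (rule ext) (simp add: vec_simps sum_fun_apply sum_distrib_left)

lemma smul_left_cancel: "c \<noteq> 0 \<Longrightarrow> smul c u = smul c v \<Longrightarrow> u = v"
  by (rule ext) (drule fun_cong, simp add: vec_simps)
lemma smul_eq_0_cancel: "c \<noteq> 0 \<Longrightarrow> smul c u = 0 \<Longrightarrow> u = 0"
  by (rule ext) (drule fun_cong, simp add: vec_simps)
lemma smul_eq_imp_eq_inverse: "c \<noteq> 0 \<Longrightarrow> smul c u = v \<Longrightarrow> u = smul (inverse c) v"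
  by (rule ext, drule fun_cong, simp add: vec_simps field_simps)

lemma vec_eq_sum_bv: assumes "x \<in> V" shows "x = (\<Sum>b\<in>supp x. smul (x b) (bv b))"
proof (rule ext)
  fix c
  have "(\<Sum>b\<in>supp x. smul (x b) (bv b)) c = (\<Sum>b\<in>supp x. x b * (if c = b then 1 else 0))"
    by (simp add: smul_apply sum_fun_apply bv_apply)
  also have "\<dots> = x c" using finite_supp[OF assms]
    by (cases "x c = 0") (simp_all add: if_distrib cong: if_cong)
  finally show "x c = (\<Sum>b\<in>supp x. smul (x b) (bv b)) c" by simp
qed

lemma br_V[simp]: "br s la a b \<in> V"
  by (cases a; cases b) simp_all

lemma brk_eq_sum_over:
  assumes "finite A" "supp x \<subseteq> A" "finite B" "supp y \<subseteq> B"
  shows "brk s la x y c = (\<Sum>b1\<in>A. \<Sum>b2\<in>B. x b1 * y b2 * br s la b1 b2 c)"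
proof -
  have "brk s la x y c = (\<Sum>b1\<in>supp x. \<Sum>b2\<in>B. x b1 * y b2 * br s la b1 b2 c)"
    unfolding brk_def
    by (rule sum.cong[OF refl], rule sum.mono_neutral_left) (use assms in auto)
  also have "\<dots> = (\<Sum>b1\<in>A. \<Sum>b2\<in>B. x b1 * y b2 * br s la b1 b2 c)"
    by (rule sum.mono_neutral_left) (use assms in auto)
  finally show ?thesis .
qed

lemma brk_zero_left[simp]: "brk s la 0 x = 0" by (rule ext) (simp add: brk_def supp_def vec_simps)
lemma brk_zero_right[simp]: "brk s la x 0 = 0" by (rule ext) (simp add: brk_def supp_def vec_simps)

text \<open>Outside \<open>V\<close> the bracket degenerates to \<open>0\<close>, as the sums in \<open>brk\<close> range over infinite sets.\<close>

lemma brk_not_V_left: "x \<notin> V \<Longrightarrow> brk s la x y = 0"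
  by (rule ext) (simp add: brk_def V_def zero_fun_apply)
lemma brk_not_V_right: "y \<notin> V \<Longrightarrow> brk s la x y = 0"
  by (rule ext) (simp add: brk_def V_def zero_fun_apply)

lemma brk_expand: "brk s la x y = (\<Sum>b1\<in>supp x. \<Sum>b2\<in>supp y. smul (x b1 * y b2) (br s la b1 b2))"
  by (rule ext) (simp add: vec_simps brk_def sum_fun_apply)

lemma brk_V[simp]: "brk s la x y \<in> V"
  by (cases "x \<in> V \<and> y \<in> V") (auto simp: brk_expand brk_not_V_left brk_not_V_right)

lemma brk_add_left: assumes "x \<in> V" "y \<in> V" shows "brk s la (x + y) z = brk s la x z + brk s la y z"
proof (cases "z \<in> V")
  case True
  let ?A = "supp x \<union> supp y"
  have fA: "finite ?A" using assms by (simp add: finite_supp)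
  show ?thesis
  proof (rule ext)
    fix c
    have "brk s la (x+y) z c = (\<Sum>b1\<in>?A. \<Sum>b2\<in>supp z. (x+y) b1 * z b2 * br s la b1 b2 c)"
      "brk s la x z c = (\<Sum>b1\<in>?A. \<Sum>b2\<in>supp z. x b1 * z b2 * br s la b1 b2 c)"
      "brk s la y z c = (\<Sum>b1\<in>?A. \<Sum>b2\<in>supp z. y b1 * z b2 * br s la b1 b2 c)"
      by (rule brk_eq_sum_over; use fA True finite_supp in \<open>auto simp: vec_simps\<close>)+
    then show "brk s la (x + y) z c = (brk s la x z + brk s la y z) c"
      by (simp add: sum.distrib[symmetric] algebra_simps vec_simps)
  qed
qed (simp add: brk_not_V_right)

lemma brk_add_right: assumes "x \<in> V" "y \<in> V" shows "brk s la z (x + y) = brk s la z x + brk s la z y"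
proof (cases "z \<in> V")
  case True
  let ?A = "supp x \<union> supp y"
  have fA: "finite ?A" using assms by (simp add: finite_supp)
  show ?thesis
  proof (rule ext)
    fix c
    have "brk s la z (x+y) c = (\<Sum>b1\<in>supp z. \<Sum>b2\<in>?A. z b1 * (x+y) b2 * br s la b1 b2 c)"
      "brk s la z x c = (\<Sum>b1\<in>supp z. \<Sum>b2\<in>?A. z b1 * x b2 * br s la b1 b2 c)"
      "brk s la z y c = (\<Sum>b1\<in>supp z. \<Sum>b2\<in>?A. z b1 * y b2 * br s la b1 b2 c)"
      by (rule brk_eq_sum_over; use fA True finite_supp in \<open>auto simp: vec_simps\<close>)+
    then show "brk s la z (x + y) c = (brk s la z x + brk s la z y) c"
      by (simp add: sum.distrib[symmetric] algebra_simps vec_simps)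
  qed
qed (simp add: brk_not_V_left)

lemma brk_smul_left: "brk s la (smul a x) z = smul a (brk s la x z)"
proof (cases "x \<in> V \<and> z \<in> V")
  case True
  show ?thesis
  proof (rule ext)
    fix c
    have "brk s la (smul a x) z c = (\<Sum>b1\<in>supp x. \<Sum>b2\<in>supp z. (smul a x) b1 * z b2 * br s la b1 b2 c)"
      "brk s la x z c = (\<Sum>b1\<in>supp x. \<Sum>b2\<in>supp z. x b1 * z b2 * br s la b1 b2 c)"
      by (rule brk_eq_sum_over; use True finite_supp in \<open>auto simp: smul_apply\<close>)+
    then show "brk s la (smul a x) z c = smul a (brk s la x z) c"
      by (simp add: smul_apply sum_distrib_left algebra_simps)
  qed
next
  case False
  then show ?thesis
    by (cases "a = 0") (auto simp: brk_not_V_left brk_not_V_right in_V smul_apply)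
qed

lemma brk_smul_right: "brk s la z (smul a x) = smul a (brk s la z x)"
proof (cases "x \<in> V \<and> z \<in> V")
  case True
  show ?thesis
  proof (rule ext)
    fix c
    have "brk s la z (smul a x) c = (\<Sum>b1\<in>supp z. \<Sum>b2\<in>supp x. z b1 * (smul a x) b2 * br s la b1 b2 c)"
      "brk s la z x c = (\<Sum>b1\<in>supp z. \<Sum>b2\<in>supp x. z b1 * x b2 * br s la b1 b2 c)"
      by (rule brk_eq_sum_over; use True finite_supp in \<open>auto simp: smul_apply\<close>)+
    then show "brk s la z (smul a x) c = smul a (brk s la z x) c"
      by (simp add: smul_apply sum_distrib_left algebra_simps)
  qed
next
  case False
  then show ?thesis
    by (cases "a = 0") (auto simp: brk_not_V_left brk_not_V_right in_V smul_apply)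
qed

lemmas brk_linear = brk_add_left brk_add_right brk_smul_left brk_smul_right

lemma brk_bv_bv[simp]: "brk s la (bv a) (bv b) = br s la a b"
proof (rule ext)
  fix c
  have "brk s la (bv a) (bv b) c = (\<Sum>b1\<in>{a}. \<Sum>b2\<in>{b}. bv a b1 * bv b b2 * br s la b1 b2 c)"
    by (rule brk_eq_sum_over) (auto simp: bv_apply split: if_splits)
  then show "brk s la (bv a) (bv b) c = br s la a b c" by (simp add: bv_apply)
qed

lemma brk_sum_left: "(\<And>a. a \<in> A \<Longrightarrow> f a \<in> V) \<Longrightarrow> brk s la (sum f A) z = (\<Sum>a\<in>A. brk s la (f a) z)"
  by (induction A rule: infinite_finite_induct) (auto simp: brk_add_left)
lemma brk_sum_right: "(\<And>a. a \<in> A \<Longrightarrow> f a \<in> V) \<Longrightarrow> brk s la z (sum f A) = (\<Sum>a\<in>A. brk s la z (f a))"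
  by (induction A rule: infinite_finite_induct) (auto simp: brk_add_right)

lemma brk_eq_sum_left: "y \<in> V \<Longrightarrow> brk s la y z = (\<Sum>b\<in>supp y. smul (y b) (brk s la (bv b) z))"
  by (subst vec_eq_sum_bv, assumption, subst brk_sum_left) (auto simp: brk_smul_left)
lemma brk_eq_sum_right: "y \<in> V \<Longrightarrow> brk s la z y = (\<Sum>b\<in>supp y. smul (y b) (brk s la z (bv b)))"
  by (subst vec_eq_sum_bv, assumption, subst brk_sum_right) (auto simp: brk_smul_right)

definition V_linear :: "(vec \<Rightarrow> vec) \<Rightarrow> bool" where
  "V_linear D \<longleftrightarrow> (\<forall>x\<in>V. \<forall>y\<in>V. D (x + y) = D x + D y) \<and> (\<forall>c. \<forall>x\<in>V. D (smul c x) = smul c (D x))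
     \<and> (\<forall>x\<in>V. D x \<in> V)"

lemma V_linear_smulD: "V_linear E \<Longrightarrow> x \<in> V \<Longrightarrow> E (smul c x) = smul c (E x)"
  by (simp add: V_linear_def)
lemma V_linear_addD: "V_linear E \<Longrightarrow> x \<in> V \<Longrightarrow> y \<in> V \<Longrightarrow> E (x + y) = E x + E y"
  by (simp add: V_linear_def)
lemma V_linear_V: "V_linear D \<Longrightarrow> x \<in> V \<Longrightarrow> D x \<in> V"
  by (simp add: V_linear_def)

lemma V_linear_zero: "V_linear D \<Longrightarrow> D 0 = 0"
  using V_linear_smulD[of D 0 0] by simp

lemma V_linear_sum: assumes "V_linear D" "\<And>a. a \<in> A \<Longrightarrow> f a \<in> V" "finite A"
  shows "D (sum f A) = (\<Sum>a\<in>A. D (f a))"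
  using assms(3,2) by (induction A rule: finite_induct) (simp_all add: assms(1) V_linear_zero V_linear_addD)

lemma V_linear_eq_sum_bv: assumes "V_linear D" "x \<in> V" shows "D x = (\<Sum>b\<in>supp x. smul (x b) (D (bv b)))"
proof -
  have "D x = D (\<Sum>b\<in>supp x. smul (x b) (bv b))" using vec_eq_sum_bv[OF assms(2)] by simp
  also have "\<dots> = (\<Sum>b\<in>supp x. D (smul (x b) (bv b)))"
    by (rule V_linear_sum) (use assms finite_supp in auto)
  also have "\<dots> = (\<Sum>b\<in>supp x. smul (x b) (D (bv b)))"
    using assms(1) by (simp add: V_linear_smulD)
  finally show ?thesis .
qed

lemma V_linear_eqI:
  assumes "V_linear D" "V_linear E" "\<And>b. D (bv b) = E (bv b)" "x \<in> V" shows "D x = E x"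
  using V_linear_eq_sum_bv[OF assms(1,4)] V_linear_eq_sum_bv[OF assms(2,4)] assms(3) by simp

lemma V_linear_brk: "V_linear (brk s la z)"
  unfolding V_linear_def by (simp add: brk_add_right brk_smul_right)

lemma derivation_rule_from_basis:
  assumes D: "V_linear D" and x: "x \<in> V" and y: "y \<in> V"
    and bas: "\<And>b1 b2. b1 \<in> supp x \<Longrightarrow> b2 \<in> supp y \<Longrightarrow>
       D (br s la b1 b2) = brk s la (D (bv b1)) (bv b2) + smul \<sigma> (brk s la (bv b1) (D (bv b2)))"
  shows "D (brk s la x y) = brk s la (D x) y + smul \<sigma> (brk s la x (D y))"
proof -
  have fx: "finite (supp x)" and fy: "finite (supp y)" using x y by (auto simp: finite_supp)
  have DV: "\<And>u. u \<in> V \<Longrightarrow> D u \<in> V" using D by (rule V_linear_V)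
  have L: "D (brk s la x y) = (\<Sum>b1\<in>supp x. \<Sum>b2\<in>supp y. smul (x b1 * y b2) (D (br s la b1 b2)))"
    unfolding brk_expand using D fx fy by (simp add: V_linear_sum V_linear_smulD)
  have R1: "brk s la (D x) y = (\<Sum>b1\<in>supp x. \<Sum>b2\<in>supp y. smul (x b1 * y b2) (brk s la (D (bv b1)) (bv b2)))"
    by (subst V_linear_eq_sum_bv[OF D x], subst brk_sum_left)
      (simp_all add: DV brk_eq_sum_right[OF y] brk_smul_left smul_sum mult.commute)
  have R2: "brk s la x (D y) = (\<Sum>b1\<in>supp x. \<Sum>b2\<in>supp y. smul (x b1 * y b2) (brk s la (bv b1) (D (bv b2))))"
    by (subst V_linear_eq_sum_bv[OF D y], subst brk_sum_right)
      (simp_all add: DV brk_eq_sum_left[OF x] brk_smul_right brk_smul_left smul_sum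
        sum.swap[of _ "supp x"] mult.commute)
  show ?thesis unfolding L R1 R2
    by (simp add: bas smul_add sum.distrib smul_sum mult.commute mult.left_commute)
qed

definition ssign :: "bas \<Rightarrow> bas \<Rightarrow> complex" where
  "ssign a b = (if par a \<and> par b then -1 else 1)"

lemma br_jacobi:
  assumes "(of_int (tws s)::complex) = 2 * of_real s"
  shows "brk s la (bv a) (br s la b c) =
    brk s la (br s la a b) (bv c) + smul (ssign a b) (brk s la (bv b) (br s la a c))"
  apply (cases a; cases b; cases c)
  apply (simp_all add: brk_linear ssign_def)
  apply (simp_all add: fun_eq_iff coeff_simps pv_def assms ac_simps)
  apply (auto simp: field_simps)
  done

lemma br_antisym: "br s la a b = smul (- ssign a b) (br s la b a)"
  by (cases a; cases b) (simp_all add: ssign_def fun_eq_iff coeff_simps ac_simps)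

lemma hom_iff: "hom p x \<longleftrightarrow> x \<in> V \<and> (\<forall>b. x b \<noteq> 0 \<longrightarrow> par b = p)" by (simp add: hom_def)
lemma hom_bv: "hom (par b) (bv b)" by (simp add: hom_iff bv_apply)
lemma hom_V: "hom p x \<Longrightarrow> x \<in> V" by (simp add: hom_iff)
lemma hom_add: assumes "hom p x" "hom p y" shows "hom p (x + y)"
  unfolding hom_iff
proof (intro conjI allI impI)
  show "x + y \<in> V" using assms by (simp add: hom_V)
  fix b assume "(x + y) b \<noteq> 0"
  then have "x b \<noteq> 0 \<or> y b \<noteq> 0" by (auto simp: vec_simps)
  then show "par b = p" using assms by (auto simp: hom_iff)
qed
lemma hom_smul: "hom p x \<Longrightarrow> hom p (smul c x)" by (auto simp: hom_iff vec_simps)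

lemma brk_nonzero_imp:
  "brk s la x y c \<noteq> 0 \<Longrightarrow> \<exists>b1 b2. x b1 \<noteq> 0 \<and> y b2 \<noteq> 0 \<and> br s la b1 b2 c \<noteq> 0"
  unfolding brk_def by (fastforce elim!: sum.not_neutral_contains_not_neutral)

lemma br_par: "br s la a b c \<noteq> 0 \<Longrightarrow> par c = (par a \<noteq> par b)"
  by (cases a; cases b) (auto simp: vec_simps bv_apply split: if_splits)

lemma hom_brk: "hom p x \<Longrightarrow> hom q y \<Longrightarrow> hom (p \<noteq> q) (brk s la x y)"
  unfolding hom_iff by (auto dest!: brk_nonzero_imp br_par)

definition even_part :: "vec \<Rightarrow> vec" where "even_part x = (\<lambda>b. if par b then 0 else x b)"
definition odd_part :: "vec \<Rightarrow> vec" where "odd_part x = (\<lambda>b. if par b then x b else 0)"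

lemma even_part_add_odd_part: "even_part x + odd_part x = x"
  by (rule ext) (simp add: even_part_def odd_part_def vec_simps)
lemma hom_even_part: "x \<in> V \<Longrightarrow> hom False (even_part x)"
  unfolding hom_iff in_V even_part_def by (auto elim: finite_subset[rotated])
lemma hom_odd_part: "x \<in> V \<Longrightarrow> hom True (odd_part x)"
  unfolding hom_iff in_V odd_part_def by (auto elim: finite_subset[rotated])

lemma superder_hom: "superder s la a D \<Longrightarrow> hom p x \<Longrightarrow> hom (a \<noteq> p) (D x)"
  by (simp add: superder_def)

lemma superder_V_linear: assumes "superder s la a D" shows "V_linear D"
  unfolding V_linear_def
proof (intro conjI ballI allI)
  show "\<And>x y. x \<in> V \<Longrightarrow> y \<in> V \<Longrightarrow> D (x + y) = D x + D y" "\<And>c x. x \<in> V \<Longrightarrow> D (smul c x) = smul c (D x)"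
    using assms by (simp_all add: superder_def)
  fix x assume x: "x \<in> V"
  have "D x = D (even_part x) + D (odd_part x)"
    using even_part_add_odd_part[of x] assms hom_even_part[OF x] hom_odd_part[OF x]
    unfolding superder_def hom_iff by metis
  moreover have "D (even_part x) \<in> V" "D (odd_part x) \<in> V"
    using superder_hom[OF assms hom_even_part[OF x]] superder_hom[OF assms hom_odd_part[OF x]]
    by (simp_all add: hom_V)
  ultimately show "D x \<in> V" by simp
qed

lemma superder_basis:
  "superder s la a D \<Longrightarrow> D (br s la b1 b2) =
     brk s la (D (bv b1)) (bv b2) + smul (if a \<and> par b1 then -1 else 1) (brk s la (bv b1) (D (bv b2)))"
  unfolding superder_def using hom_bv brk_bv_bv by metis

lemma superderI_basis:
  assumes "V_linear M" "\<And>p x. hom p x \<Longrightarrow> hom (a \<noteq> p) (M x)"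
    "\<And>b1 b2. M (br s la b1 b2) =
       brk s la (M (bv b1)) (bv b2) + smul (if a \<and> par b1 then -1 else 1) (brk s la (bv b1) (M (bv b2)))"
  shows "superder s la a M"
  unfolding superder_def
proof (intro conjI allI impI ballI)
  show "\<And>x y. x \<in> V \<Longrightarrow> y \<in> V \<Longrightarrow> M (x + y) = M x + M y" "\<And>c x. x \<in> V \<Longrightarrow> M (smul c x) = smul c (M x)"
    using assms(1) by (auto simp: V_linear_def)
  show "\<And>p x. hom p x \<Longrightarrow> hom (a \<noteq> p) (M x)" by (rule assms(2))
  fix p q x y assume hx: "hom p x" and hy: "hom q y"
  show "M (brk s la x y) = brk s la (M x) y + smul (if a \<and> p then -1 else 1) (brk s la x (M y))"
  proof (rule derivation_rule_from_basis[OF assms(1) hom_V[OF hx] hom_V[OF hy]])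
    fix b1 b2 assume "b1 \<in> supp x"
    then have "par b1 = p" using hx by (auto simp: hom_iff)
    then show "M (br s la b1 b2) =
      brk s la (M (bv b1)) (bv b2) + smul (if a \<and> p then - 1 else 1) (brk s la (bv b1) (M (bv b2)))"
      using assms(3)[of b1 b2] by simp
  qed
qed

lemma superder_ad:
  assumes ts: "(of_int (tws s)::complex) = 2 * of_real s" and z: "hom a z"
  shows "superder s la a (brk s la z)"
proof (rule superderI_basis[OF V_linear_brk])
  show "\<And>p x. hom p x \<Longrightarrow> hom (a \<noteq> p) (brk s la z x)" using hom_brk z by blast
  fix b1 b2
  define \<sigma> where "\<sigma> = (if a \<and> par b1 then - 1 else (1::complex))"
  have zV: "z \<in> V" using z by (rule hom_V)
  have sign: "ssign b0 b1 = \<sigma>" if "b0 \<in> supp z" for b0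
    using z that by (auto simp: hom_iff ssign_def \<sigma>_def)
  have "brk s la z (br s la b1 b2) = (\<Sum>b0\<in>supp z. smul (z b0) (brk s la (bv b0) (br s la b1 b2)))"
    by (rule brk_eq_sum_left[OF zV])
  also have "\<dots> = (\<Sum>b0\<in>supp z. smul (z b0) (brk s la (br s la b0 b1) (bv b2))
      + smul \<sigma> (smul (z b0) (brk s la (bv b1) (br s la b0 b2))))"
  proof (rule sum.cong[OF refl])
    fix b0 assume b0: "b0 \<in> supp z"
    show "smul (z b0) (brk s la (bv b0) (br s la b1 b2)) = smul (z b0) (brk s la (br s la b0 b1) (bv b2))
      + smul \<sigma> (smul (z b0) (brk s la (bv b1) (br s la b0 b2)))"
      unfolding br_jacobi[OF ts, where a=b0 and b=b1 and c=b2] sign[OF b0] smul_add by (simp add: mult.commute)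
  qed
  also have "\<dots> = (\<Sum>b0\<in>supp z. smul (z b0) (brk s la (br s la b0 b1) (bv b2)))
      + smul \<sigma> (\<Sum>b0\<in>supp z. smul (z b0) (brk s la (bv b1) (br s la b0 b2)))"
    by (simp only: sum.distrib smul_sum)
  also have "\<dots> = brk s la (brk s la z (bv b1)) (bv b2) + smul \<sigma> (brk s la (bv b1) (brk s la z (bv b2)))"
    by (simp add: brk_eq_sum_left[OF zV] brk_sum_left brk_sum_right brk_smul_left brk_smul_right)
  finally show "brk s la z (br s la b1 b2) =
    brk s la (brk s la z (bv b1)) (bv b2) + smul \<sigma> (brk s la (bv b1) (brk s la z (bv b2)))" .
qed

lemma superder_add:
  assumes D: "superder s la a D" and E: "superder s la a E"
  shows "superder s la a (\<lambda>v. D v + E v)"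
proof (rule superderI_basis)
  show "V_linear (\<lambda>v. D v + E v)"
    using superder_V_linear[OF D] superder_V_linear[OF E]
    by (simp add: V_linear_def smul_add ac_simps)
  show "\<And>p x. hom p x \<Longrightarrow> hom (a \<noteq> p) (D x + E x)"
    using superder_hom[OF D] superder_hom[OF E] hom_add by blast
  show "\<And>b1 b2. D (br s la b1 b2) + E (br s la b1 b2) = brk s la (D (bv b1) + E (bv b1)) (bv b2)
      + smul (if a \<and> par b1 then -1 else 1) (brk s la (bv b1) (D (bv b2) + E (bv b2)))"
    using superder_basis[OF D] superder_basis[OF E]
      V_linear_V[OF superder_V_linear[OF D] bv_V] V_linear_V[OF superder_V_linear[OF E] bv_V]
    by (simp add: brk_add_left brk_add_right smul_add ac_simps)
qed

lemma superder_smul: assumes D: "superder s la a D" shows "superder s la a (\<lambda>v. smul c (D v))"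
proof (rule superderI_basis)
  show "V_linear (\<lambda>v. smul c (D v))"
    using superder_V_linear[OF D] by (simp add: V_linear_def smul_add mult.commute)
  show "\<And>p x. hom p x \<Longrightarrow> hom (a \<noteq> p) (smul c (D x))"
    using superder_hom[OF D] hom_smul by blast
  show "\<And>b1 b2. smul c (D (br s la b1 b2)) = brk s la (smul c (D (bv b1))) (bv b2)
      + smul (if a \<and> par b1 then -1 else 1) (brk s la (bv b1) (smul c (D (bv b2))))"
    using superder_basis[OF D] by (simp add: brk_smul_left brk_smul_right smul_add mult.commute)
qed

lemma superder_diff:
  assumes "superder s la a D" "superder s la a E" shows "superder s la a (\<lambda>v. D v - E v)"
proof -
  have "(\<lambda>v. D v - E v) = (\<lambda>v. D v + smul (-1) (E v))" by (simp add: fun_eq_iff vec_simps)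
  then show ?thesis using superder_add[OF assms(1) superder_smul[OF assms(2)]] by simp
qed

subsection \<open>The outer derivations \<open>\<partial>\<^sub>G\<close> and \<open>\<partial>\<^sub>D\<close>\<close>

lemma dG_add: "dG (x + y) = dG x + dG y" by (rule ext) (simp add: dG_def vec_simps split: bas.split)
lemma dG_smul: "dG (smul c x) = smul c (dG x)" by (rule ext) (simp add: dG_def vec_simps split: bas.split)
lemma dG_zero[simp]: "dG 0 = 0" by (rule ext) (simp add: dG_def vec_simps split: bas.split)
lemma dG_bv: "dG (bv b) = (case b of G k \<Rightarrow> bv (H k) | _ \<Rightarrow> 0)"
  by (rule ext) (auto simp: dG_def vec_simps bv_apply split: bas.split)

lemma dD_add: "dD (x + y) = dD x + dD y" by (rule ext) (simp add: dD_def vec_simps algebra_simps split: bas.split)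
lemma dD_smul: "dD (smul c x) = smul c (dD x)" by (rule ext) (simp add: dD_def vec_simps split: bas.split)
lemma dD_zero[simp]: "dD 0 = 0" by (rule ext) (simp add: dD_def vec_simps split: bas.split)

fun dD_weight :: "bas \<Rightarrow> complex" where
  "dD_weight (L _) = 0" | "dD_weight (I _) = 2" | "dD_weight (G _) = 1" | "dD_weight (H _) = 3"

lemma dD_bv: "dD (bv b) = smul (dD_weight b) (bv b)"
  by (rule ext) (auto simp: dD_def vec_simps bv_apply split: bas.split)

lemma dG_V: assumes x: "x \<in> V" shows "dG x \<in> V"
proof -
  let ?f = "\<lambda>b. case b of G k \<Rightarrow> H k | _ \<Rightarrow> b"
  have "supp (dG x) \<subseteq> ?f ` supp x"
  proof
    fix c assume "c \<in> supp (dG x)"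
    then obtain k where "c = H k" "x (G k) \<noteq> 0" by (cases c) (auto simp: dG_def)
    then show "c \<in> ?f ` supp x" by (intro image_eqI[of _ _ "G k"]) simp_all
  qed
  moreover have "finite (?f ` supp x)" using x by (simp add: finite_supp)
  ultimately show ?thesis by (simp add: V_def finite_subset)
qed

lemma dD_V: assumes "x \<in> V" shows "dD x \<in> V"
proof -
  have "dD x b \<noteq> 0 \<Longrightarrow> x b \<noteq> 0" for b by (cases b) (auto simp: dD_def)
  then have "{b. dD x b \<noteq> 0} \<subseteq> {b. x b \<noteq> 0}" by blast
  then show ?thesis using assms unfolding in_V by (rule finite_subset)
qed

lemma hom_dG: assumes "hom p x" shows "hom p (dG x)"
  unfolding hom_iff
proof (intro conjI allI impI)
  show "dG x \<in> V" using assms by (simp add: hom_V dG_V)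
  fix b assume "dG x b \<noteq> 0" then show "par b = p" using assms by (cases b) (auto simp: dG_def hom_iff)
qed

lemma hom_dD: assumes "hom p x" shows "hom p (dD x)"
  unfolding hom_iff
proof (intro conjI allI impI)
  show "dD x \<in> V" using assms by (simp add: hom_V dD_V)
  fix b assume "dD x b \<noteq> 0" then show "par b = p" using assms by (cases b) (auto simp: dD_def hom_iff)
qed

lemma V_linear_dG: "V_linear dG" by (simp add: V_linear_def dG_add dG_smul dG_V)
lemma V_linear_dD: "V_linear dD" by (simp add: V_linear_def dD_add dD_smul dD_V)

lemma superder_dG: "superder s la False dG"
proof (rule superderI_basis[OF V_linear_dG])
  show "\<And>p x. hom p x \<Longrightarrow> hom (False \<noteq> p) (dG x)" by (simp add: hom_dG)
  show "\<And>b1 b2. dG (br s la b1 b2) = brk s la (dG (bv b1)) (bv b2)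
      + smul (if False \<and> par b1 then - 1 else 1) (brk s la (bv b1) (dG (bv b2)))"
    subgoal for b1 b2 by (cases b1; cases b2) (simp_all add: dG_bv dG_add dG_smul)
    done
qed

text \<open>\<open>\<partial>\<^sub>D\<close> fails to be a derivation for \<open>\<lambda> \<noteq> 0\<close> on \<open>[L\<^sub>m, G\<^sub>p]\<close>, whose \<open>H\<close>-component has
  weight 3 while \<open>L\<^sub>m\<close> and \<open>G\<^sub>p\<close> have weights 0 and 1.\<close>

lemma superder_dD: assumes "la = 0" shows "superder s la False dD"
proof (rule superderI_basis[OF V_linear_dD])
  show "\<And>p x. hom p x \<Longrightarrow> hom (False \<noteq> p) (dD x)" by (simp add: hom_dD)
  show "\<And>b1 b2. dD (br s la b1 b2) = brk s la (dD (bv b1)) (bv b2)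
      + smul (if False \<and> par b1 then - 1 else 1) (brk s la (bv b1) (dD (bv b2)))"
    subgoal for b1 b2
      by (cases b1; cases b2)
        (simp_all add: dD_bv dD_add dD_smul assms brk_smul_left brk_smul_right fun_eq_iff coeff_simps ac_simps)

    done
qed

lemma V_linear_outer: "V_linear (\<lambda>v. smul a (dG v) + smul b (dD v))"
  unfolding V_linear_def
  by (simp add: dG_add dD_add dG_smul dD_smul smul_add dG_V dD_V ac_simps)

subsection \<open>The grading by \<open>ad L\<^sub>0\<close>\<close>

lemma tws_cases: "s = 0 \<or> s = 1/2 \<Longrightarrow> (s = 0 \<and> tws s = 0) \<or> (s = 1/2 \<and> tws s = 1)"
  by (elim disjE; hypsubst; simp add: tws_def)

lemma of_int_tws: "s = 0 \<or> s = 1/2 \<Longrightarrow> (of_int (tws s)::complex) = 2 * of_real s"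
  by (elim disjE; hypsubst; simp add: tws_def)

lemma two_pv: "s = 0 \<or> s = 1/2 \<Longrightarrow> 2 * pv s k = of_int (2 * k + tws s)"
  by (elim disjE; hypsubst; simp add: tws_def pv_def)

lemma half_minus_pv_eq_0_iff:
  assumes "s = 0 \<or> s = 1/2" shows "of_int m / 2 - pv s k = 0 \<longleftrightarrow> m = 2 * k + tws s"
proof -
  have "of_int m / 2 - pv s k = 0 \<longleftrightarrow> (of_int m :: complex) = of_int (2 * k + tws s)"
    using two_pv[OF assms, of k] by (auto simp: field_simps)
  then show ?thesis by (simp only: of_int_eq_iff)
qed

text \<open>Twice the \<open>-ad L\<^sub>0\<close>-eigenvalue, so that it is integral also for \<open>s = 1/2\<close>.\<close>

fun deg :: "real \<Rightarrow> bas \<Rightarrow> int" where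
  "deg s (L m) = 2 * m" | "deg s (I m) = 2 * m" | "deg s (G k) = 2 * k + tws s" | "deg s (H k) = 2 * k + tws s"

lemma half_deg_G: "s = 0 \<or> s = 1/2 \<Longrightarrow> of_int (deg s (G k)) / 2 = pv s k"
  using two_pv[of s k] by (simp add: field_simps)

lemma br_deg: "br s la a b c \<noteq> 0 \<Longrightarrow> deg s c = deg s a + deg s b"
  by (cases a; cases b) (auto simp: coeff_simps split: if_splits)

definition in_deg :: "real \<Rightarrow> int \<Rightarrow> vec \<Rightarrow> bool" where
  "in_deg s d x \<longleftrightarrow> (\<forall>c. x c \<noteq> 0 \<longrightarrow> deg s c = d)"

lemma in_degD: "in_deg s d w \<Longrightarrow> deg s c \<noteq> d \<Longrightarrow> w c = 0" by (auto simp: in_deg_def)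

lemma in_deg_brk: "in_deg s d1 x \<Longrightarrow> in_deg s d2 y \<Longrightarrow> in_deg s (d1 + d2) (brk s la x y)"
  unfolding in_deg_def by (auto dest!: brk_nonzero_imp br_deg)

lemma hom_even_in_deg_eq: assumes "hom False w" "in_deg s (2 * n) w"
  shows "w = smul (w (L n)) (bv (L n)) + smul (w (I n)) (bv (I n))"
  using assms by (intro ext, case_tac x) (auto simp: coeff_simps hom_iff in_deg_def)

lemma hom_odd_in_deg_eq: assumes "hom True w" "in_deg s (2 * k + tws s) w"
  shows "w = smul (w (G k)) (bv (G k)) + smul (w (H k)) (bv (H k))"
  using assms by (intro ext, case_tac x) (auto simp: coeff_simps hom_iff in_deg_def)

lemma hom_odd_in_even_deg: assumes "hom True w" "in_deg s (2 * n) w" "tws s = 1" shows "w = 0"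
proof (rule ext)
  fix c have "2 * k + 1 \<noteq> 2 * n" for k :: int by presburger
  then show "w c = 0 c" using assms by (cases c) (auto simp: zero_fun_apply hom_iff in_deg_def)
qed

lemma hom_even_in_odd_deg: assumes "hom False w" "in_deg s (2 * k + 1) w" shows "w = 0"
proof (rule ext)
  fix c have "2 * n \<noteq> 2 * k + 1" for n :: int by presburger
  then show "w c = 0 c" using assms by (cases c) (auto simp: zero_fun_apply hom_iff in_deg_def)
qed

lemma brk_bv_apply:
  assumes w: "w \<in> V" and S: "finite S" and z: "\<And>b. b \<notin> S \<Longrightarrow> br s la a b c = 0"
  shows "brk s la (bv a) w c = (\<Sum>b\<in>S. w b * br s la a b c)"
proof -
  have "brk s la (bv a) w c = (\<Sum>b1\<in>{a}. \<Sum>b2\<in>supp w \<union> S. bv a b1 * w b2 * br s la b1 b2 c)"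
    by (rule brk_eq_sum_over) (use w S finite_supp in \<open>auto simp: bv_apply split: if_splits\<close>)
  also have "\<dots> = (\<Sum>b\<in>S. w b * br s la a b c)"
    by (simp add: bv_apply, rule sum.mono_neutral_right) (use w S finite_supp z in auto)
  finally show ?thesis .
qed

lemma brk_L_apply_L: "w \<in> V \<Longrightarrow> brk s la (bv (L m)) w (L j) = of_int (2*m - j) * w (L (j - m))"
  by (subst brk_bv_apply[where S="{L (j - m)}"], assumption, simp,
      case_tac b, auto simp: coeff_simps)

lemma brk_L_apply_I: "w \<in> V \<Longrightarrow> brk s la (bv (L m)) w (I j) = of_int (2*m - j) * w (I (j - m))"
  by (subst brk_bv_apply[where S="{I (j - m)}"], assumption, simp,
      case_tac b, auto simp: coeff_simps)

lemma brk_L_apply_G: "w \<in> V \<Longrightarrow> brk s la (bv (L m)) w (G j) = (of_int m / 2 - pv s (j - m)) * w (G (j - m))"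
  by (subst brk_bv_apply[where S="{G (j - m)}"], assumption, simp,
      case_tac b, auto simp: coeff_simps)

lemma brk_L_apply_H: "w \<in> V \<Longrightarrow> brk s la (bv (L m)) w (H j) =
   (of_int m / 2 - pv s (j - m)) * w (H (j - m)) + la * (of_int m + 1) * w (G (j - m))"
  by (subst brk_bv_apply[where S="{G (j - m), H (j - m)}"], assumption, simp,
      case_tac b, auto simp: coeff_simps)

lemma brk_L0_apply:
  assumes "s = 0 \<or> s = 1/2" "w \<in> V"
  shows "brk s la (bv (L 0)) w c =
    - (of_int (deg s c) / 2) * w c + (case c of H k \<Rightarrow> la * w (G k) | _ \<Rightarrow> 0)"
  using assms(2) half_deg_G[OF assms(1)]
  by (cases c) (simp_all add: brk_L_apply_L brk_L_apply_I brk_L_apply_G brk_L_apply_H)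

lemma brk_bv_L_swap: "brk s la w (bv (L m)) = smul (-1) (brk s la (bv (L m)) w)"
proof (cases "w \<in> V")
  case True
  have "brk s la w (bv (L m)) = (\<Sum>b\<in>supp w. smul (-1) (smul (w b) (br s la (L m) b)))"
    by (simp add: brk_eq_sum_left[OF True] br_antisym[of s la _ "L m"] ssign_def mult.commute)
  also have "\<dots> = smul (-1) (brk s la (bv (L m)) w)"
    by (simp add: brk_eq_sum_right[OF True] smul_sum)
  finally show ?thesis .
qed (simp add: brk_not_V_left brk_not_V_right)

text \<open>\<open>ad L\<^sub>0\<close> is not diagonalisable (it has Jordan blocks on \<open>G\<^sub>p, H\<^sub>p\<close> when \<open>\<lambda> \<noteq> 0\<close>), but an
  eigenvector modulo degree \<open>d\<close> still lies in degree \<open>d\<close>.\<close>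

lemma in_deg_of_L0_eigen:
  assumes sc: "s = 0 \<or> s = 1/2" and w: "w \<in> V"
    and eig: "\<And>c. deg s c \<noteq> d \<Longrightarrow> brk s la (bv (L 0)) w c = - (of_int d / 2) * w c"
  shows "in_deg s d w"
proof -
  have not_H: "w c = 0" if "deg s c \<noteq> d" "\<forall>k. c \<noteq> H k" for c
  proof -
    have "(of_int d / 2 - of_int (deg s c) / 2) * w c = 0"
      using eig[OF that(1)] brk_L0_apply[OF sc w, of la c] that(2)
      by (cases c) (simp_all add: algebra_simps)
    moreover have "(of_int d / 2 - of_int (deg s c) / 2 :: complex) \<noteq> 0" using that(1) by simp
    ultimately show ?thesis by simp
  qed
  have "w c = 0" if "deg s c \<noteq> d" for c
  proof (cases "\<exists>k. c = H k")
    case True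
    then obtain k where c: "c = H k" by blast
    have "w (G k) = 0" using not_H[of "G k"] that c by simp
    then have "(of_int d / 2 - of_int (deg s c) / 2) * w c = 0"
      using eig[OF that] brk_L0_apply[OF sc w, of la c] c by (simp add: algebra_simps)
    moreover have "(of_int d / 2 - of_int (deg s c) / 2 :: complex) \<noteq> 0" using that by simp
    ultimately show ?thesis by simp
  qed (use not_H that in blast)
  then show ?thesis unfolding in_deg_def by blast
qed

lemma ad_L_inj_on_deg:
  assumes sc: "s = 0 \<or> s = 1/2" and w: "w \<in> V" and d: "in_deg s d w" "2 * m \<noteq> d" "m \<noteq> d"
    and z: "brk s la (bv (L m)) w = 0"
  shows "w = 0"
proof -
  have z_at: "brk s la (bv (L m)) w c = 0" for c using z by (simp add: zero_fun_apply)
  have G0: "w (G k) = 0" for k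
  proof (rule ccontr)
    assume nz: "w (G k) \<noteq> 0"
    then have "d = 2 * k + tws s" using d(1) by (auto simp: in_deg_def)
    moreover have "(of_int m / 2 - pv s k) * w (G k) = 0" using z_at[of "G (k + m)"] brk_L_apply_G[OF w] by simp
    ultimately show False using nz half_minus_pv_eq_0_iff[OF sc, of m k] d(3) by simp
  qed
  show ?thesis
  proof (rule ext)
    fix c show "w c = 0 c"
    proof (cases c)
      case (L j)
      have "of_int (m - j) * w (L j) = (0::complex)" using z_at[of "L (j + m)"] brk_L_apply_L[OF w] by simp
      moreover have "w (L j) \<noteq> 0 \<Longrightarrow> m \<noteq> j" using d(1,2) by (auto simp: in_deg_def)
      ultimately show ?thesis using L by (auto simp: zero_fun_apply)
    next
      case (I j)
      have "of_int (m - j) * w (I j) = (0::complex)" using z_at[of "I (j + m)"] brk_L_apply_I[OF w] by simp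
      moreover have "w (I j) \<noteq> 0 \<Longrightarrow> m \<noteq> j" using d(1,2) by (auto simp: in_deg_def)
      ultimately show ?thesis using I by (auto simp: zero_fun_apply)
    next
      case (G k) then show ?thesis using G0 by (simp add: zero_fun_apply)
    next
      case (H k)
      have "(of_int m / 2 - pv s k) * w (H k) = 0" using z_at[of "H (k + m)"] brk_L_apply_H[OF w] G0[of k] by simp
      moreover have "w (H k) \<noteq> 0 \<Longrightarrow> m \<noteq> 2 * k + tws s" using d(1,3) by (auto simp: in_deg_def)
      ultimately show ?thesis using H half_minus_pv_eq_0_iff[OF sc, of m k] by (auto simp: zero_fun_apply)
    qed
  qed
qed

lemma centralizer_of_L_trivial:
  assumes sc: "s = 0 \<or> s = 1/2" and x: "x \<in> V" and z: "\<And>m. brk s la x (bv (L m)) = 0"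
  shows "x = 0"
proof -
  have z_at: "brk s la (bv (L m)) x c = 0" for m c
    using fun_cong[OF z[of m], of c] by (simp add: brk_bv_L_swap vec_simps)
  have m_ne: "of_int (2 * k + tws s + 1) / 2 - pv s k \<noteq> 0" for k
    by (subst half_minus_pv_eq_0_iff[OF sc]) simp
  have G0: "x (G k) = 0" for k
    using z_at[of "2 * k + tws s + 1" "G (k + (2 * k + tws s + 1))"] brk_L_apply_G[OF x] m_ne[of k] by simp
  show ?thesis
  proof (rule ext)
    fix c show "x c = 0 c"
    proof (cases c)
      case (L j) then show ?thesis
        using z_at[of "j + 1" "L (j + (j + 1))"] brk_L_apply_L[OF x] by (simp add: zero_fun_apply)
    next
      case (I j) then show ?thesis
        using z_at[of "j + 1" "I (j + (j + 1))"] brk_L_apply_I[OF x] by (simp add: zero_fun_apply)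
    next
      case (G k) then show ?thesis using G0 by (simp add: zero_fun_apply)
    next
      case (H k) then show ?thesis
        using z_at[of "2 * k + tws s + 1" "H (k + (2 * k + tws s + 1))"] brk_L_apply_H[OF x] G0[of k] m_ne[of k]
        by (simp add: zero_fun_apply)
    qed
  qed
qed

subsection \<open>Reduction to degree-preserving superderivations\<close>

text \<open>Outside degree 0, \<open>ad L\<^sub>0\<close> is invertible (triangular on each pair \<open>G\<^sub>p, H\<^sub>p\<close>); the
  witness \<open>x\<close> is its inverse applied to \<open>D L\<^sub>0\<close>.\<close>

lemma exists_ad_normalizing_L0:
  assumes sc: "s = 0 \<or> s = 1/2" and D: "superder s la a D"
  shows "\<exists>x. hom a x \<and> in_deg s 0 (D (bv (L 0)) - brk s la x (bv (L 0)))"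
proof -
  define y where "y = D (bv (L 0))"
  have hy: "hom a y" using superder_hom[OF D hom_bv[of "L 0"]] by (simp add: y_def)
  define x where "x = (\<lambda>c. if deg s c = 0 then 0 else
    2 * (y c + (case c of H k \<Rightarrow> la * (2 * y (G k) / of_int (deg s c)) | _ \<Rightarrow> 0)) / of_int (deg s c))"
  have x_nz: "y c \<noteq> 0 \<or> (\<exists>k. c = H k \<and> y (G k) \<noteq> 0)" if "x c \<noteq> 0" for c
    using that by (cases c) (auto simp: x_def split: if_splits)
  let ?f = "\<lambda>b. case b of G k \<Rightarrow> H k | _ \<Rightarrow> b"
  have "supp x \<subseteq> supp y \<union> ?f ` supp y"
  proof
    fix c assume "c \<in> supp x"
    then consider "y c \<noteq> 0" | k where "c = H k" "y (G k) \<noteq> 0" using x_nz by auto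
    then show "c \<in> supp y \<union> ?f ` supp y"
    proof cases
      case (2 k) then show ?thesis by (intro UnI2 image_eqI[of _ _ "G k"]) simp_all
    qed simp
  qed
  moreover have "finite (supp y \<union> ?f ` supp y)" using hom_V[OF hy] by (simp add: finite_supp)
  ultimately have xV: "x \<in> V" unfolding V_def by (auto intro: finite_subset)
  have hx: "hom a x"
    unfolding hom_iff using xV x_nz hy by (force simp: hom_iff)
  have "brk s la x (bv (L 0)) c = y c" if "deg s c \<noteq> 0" for c
  proof -
    have nz: "(of_int (deg s c) :: complex) \<noteq> 0" using that by simp
    have GH: "deg s (G k) = deg s (H k)" for k by simp
    show ?thesis
      using nz by (simp add: brk_bv_L_swap vec_simps brk_L0_apply[OF sc xV])
        (cases c; simp add: x_def GH field_simps del: deg.simps)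
  qed
  then show ?thesis using hx unfolding in_deg_def y_def[symmetric] by (force simp: vec_simps)
qed

lemma in_deg_image_from_L0_rule:
  assumes sc: "s = 0 \<or> s = 1/2" and E: "superder s la a E" and z: "in_deg s 0 (E (bv (L 0)))"
    and rule: "E (br s la e (L 0)) = smul (of_int (deg s e) / 2) (E (bv e)) + r" and r: "in_deg s (deg s e) r"
  shows "in_deg s (deg s e) (E (bv e))"
proof (rule in_deg_of_L0_eigen[OF sc V_linear_V[OF superder_V_linear[OF E] bv_V]])
  fix c assume c: "deg s c \<noteq> deg s e"
  have "in_deg s (deg s e + 0) (brk s la (bv e) (E (bv (L 0))))"
    by (rule in_deg_brk[OF _ z]) (auto simp: in_deg_def bv_apply)
  then have "brk s la (bv e) (E (bv (L 0))) c = 0" using c by (simp add: in_degD)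
  moreover have "r c = 0" using r c by (rule in_degD)
  moreover note fun_cong[OF superder_basis[OF E, of e "L 0"], of c]
  ultimately have "of_int (deg s e) / 2 * E (bv e) c = brk s la (E (bv e)) (bv (L 0)) c"
    using fun_cong[OF rule, of c] by (simp add: vec_simps)
  then show "brk s la (bv (L 0)) (E (bv e)) c = - (of_int (deg s e) / 2) * E (bv e) c"
    by (simp add: brk_bv_L_swap vec_simps)
qed

definition deg_preserving :: "real \<Rightarrow> (vec \<Rightarrow> vec) \<Rightarrow> bool" where
  "deg_preserving s E \<longleftrightarrow> (\<forall>e. in_deg s (deg s e) (E (bv e)))"

lemma deg_preservingD: "deg_preserving s E \<Longrightarrow> in_deg s (deg s e) (E (bv e))"
  by (simp add: deg_preserving_def)

lemma deg_preserving_if_L0_in_deg_0: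
  assumes sc: "s = 0 \<or> s = 1/2" and E: "superder s la a E" and z: "in_deg s 0 (E (bv (L 0)))"
  shows "deg_preserving s E"
  unfolding deg_preserving_def
proof
  fix e
  note rule = in_deg_image_from_L0_rule[OF sc E z]
  have E_smul: "E (smul c (bv b)) = smul c (E (bv b))" for c b
    using V_linear_smulD[OF superder_V_linear[OF E] bv_V] .
  have E_add: "E (x + y) = E x + E y" if "x \<in> V" "y \<in> V" for x y
    using V_linear_addD[OF superder_V_linear[OF E] that] .
  have in_deg_0: "in_deg s d 0" for d by (simp add: in_deg_def zero_fun_apply)
  have H: "in_deg s (deg s (H k)) (E (bv (H k)))" for k
    by (rule rule[where r=0]) (simp_all add: E_smul half_deg_G[OF sc, symmetric] in_deg_0)
  show "in_deg s (deg s e) (E (bv e))"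
  proof (cases e)
    case (G k)
    have "E (br s la (G k) (L 0)) = smul (of_int (deg s (G k)) / 2) (E (bv (G k))) + smul (- la) (E (bv (H k)))"
      by (simp only: half_deg_G[OF sc]) (simp add: E_add E_smul)
    then have "in_deg s (deg s (G k)) (E (bv (G k)))"
      by (rule rule) (use H[of k] in \<open>auto simp: in_deg_def vec_simps\<close>)
    then show ?thesis using G by simp
  next
    case (L n)
    have "E (br s la (L n) (L 0)) = smul (of_int (deg s (L n)) / 2) (E (bv (L n))) + 0" by (simp add: E_smul)
    then show ?thesis using L rule in_deg_0 by blast
  next
    case (I n)
    have "E (br s la (I n) (L 0)) = smul (of_int (deg s (I n)) / 2) (E (bv (I n))) + 0" by (simp add: E_smul)
    then show ?thesis using I rule in_deg_0 by blast
  qed (use H in simp)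
qed

lemma deg_preserving_diff_ad:
  assumes E: "deg_preserving s E" and x: "in_deg s 0 x"
  shows "deg_preserving s (\<lambda>v. E v - brk s la x v)"
  unfolding deg_preserving_def in_deg_def
proof (intro allI impI)
  fix e c assume "(E (bv e) - brk s la x (bv e)) c \<noteq> 0"
  then have "E (bv e) c \<noteq> 0 \<or> brk s la x (bv e) c \<noteq> 0" by (auto simp: vec_simps)
  moreover have "in_deg s (0 + deg s e) (brk s la x (bv e))"
    by (rule in_deg_brk[OF x]) (auto simp: in_deg_def bv_apply)
  ultimately show "deg s c = deg s e" using deg_preservingD[OF E, of e] by (auto simp: in_deg_def)
qed

lemma exists_ad_deg_preserving:
  assumes sc: "s = 0 \<or> s = 1/2" and D: "superder s la a D"
  shows "\<exists>x. hom a x \<and> superder s la a (\<lambda>v. D v - brk s la x v) \<and> deg_preserving s (\<lambda>v. D v - brk s la x v)"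
proof -
  obtain x where x: "hom a x" and z: "in_deg s 0 (D (bv (L 0)) - brk s la x (bv (L 0)))"
    using exists_ad_normalizing_L0[OF sc D] by blast
  have D': "superder s la a (\<lambda>v. D v - brk s la x v)"
    by (rule superder_diff[OF D superder_ad[OF of_int_tws[OF sc] x]])
  show ?thesis using x D' deg_preserving_if_L0_in_deg_0[OF sc D'] z by auto
qed

lemma deg_preserving_L_step:
  assumes sc: "s = 0 \<or> s = 1/2" and E: "superder s la a E" and dp: "deg_preserving s E"
    and e1: "E (bv (L m)) = 0" and e2: "E (bv (L (m + n))) = 0" and c: "2 * m \<noteq> 2 * n" "m \<noteq> 2 * n"
  shows "E (bv (L n)) = 0"
proof -
  have lin: "V_linear E" by (rule superder_V_linear[OF E])
  have "brk s la (bv (L m)) (E (bv (L n))) = 0"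
    using superder_basis[OF E, of "L m" "L n"] e1 e2 by (simp add: V_linear_smulD[OF lin])
  then show ?thesis
    using ad_L_inj_on_deg[OF sc V_linear_V[OF lin bv_V] _ c] deg_preservingD[OF dp, of "L n"] by simp
qed

lemma deg_preserving_vanish_on_L:
  assumes sc: "s = 0 \<or> s = 1/2" and E: "superder s la a E" and dp: "deg_preserving s E"
    and e0: "E (bv (L 0)) = 0" and e1: "E (bv (L 1)) = 0"
  shows "E (bv (L n)) = 0"
proof -
  note step = deg_preserving_L_step[OF sc E dp]
  have e_1: "E (bv (L (-1))) = 0" by (rule step[OF e1, of "-1"]) (simp_all add: e0)
  have up: "E (bv (L (int k))) = 0" for k
    by (induction k) (simp add: e0, rule step[OF e_1], simp_all)
  have down: "E (bv (L (- int k))) = 0" for k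
    by (induction k) (simp add: e0, rule step[OF e1], simp_all)
  show ?thesis
    using up[of "nat n"] down[of "nat (- n)"] by (cases "n \<ge> 0") simp_all
qed

locale normalized_der =
  fixes s :: real and la :: complex and a :: bool and E :: "vec \<Rightarrow> vec"
  assumes s_cases: "s = 0 \<or> s = 1/2"
    and superder: "superder s la a E"
    and deg_preserving: "deg_preserving s E"
    and vanish_on_L: "E (bv (L n)) = 0"
begin

lemma linear: "V_linear E"
  by (rule superder_V_linear[OF superder])

lemma smul_bv: "E (smul c (bv b)) = smul c (E (bv b))"
  by (rule V_linear_smulD[OF linear bv_V])

lemma add_smul_bv: "E (smul c (bv b) + smul c' (bv b')) = smul c (E (bv b)) + smul c' (E (bv b'))"
  by (simp add: V_linear_addD[OF linear] smul_bv)

lemma zero: "E 0 = 0"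
  by (rule V_linear_zero[OF linear])

lemma hom_bv_image: "hom (a \<noteq> par b) (E (bv b))"
  using superder_hom[OF superder hom_bv] .

lemma in_deg_bv_image: "in_deg s (deg s b) (E (bv b))"
  by (rule deg_preservingD[OF deg_preserving])

lemma basis_rule:
  "E (br s la b1 b2) = brk s la (E (bv b1)) (bv b2) + smul (if a \<and> par b1 then -1 else 1) (brk s la (bv b1) (E (bv b2)))"
  by (rule superder_basis[OF superder])

lemma L_rule: "E (br s la (L m) b) = brk s la (bv (L m)) (E (bv b))"
  using basis_rule[of "L m" b] by (simp add: vanish_on_L)

end

lemma normalized_derI:
  assumes sc: "s = 0 \<or> s = 1/2" and E: "superder s la a E" and dp: "deg_preserving s E"
    and x: "hom a x" "in_deg s 0 x"
    and e0: "E (bv (L 0)) = brk s la x (bv (L 0))" and e1: "E (bv (L 1)) = brk s la x (bv (L 1))"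
  shows "normalized_der s la a (\<lambda>v. E v - brk s la x v)"
proof -
  have E': "superder s la a (\<lambda>v. E v - brk s la x v)"
    by (rule superder_diff[OF E superder_ad[OF of_int_tws[OF sc] x(1)]])
  have dp': "deg_preserving s (\<lambda>v. E v - brk s la x v)"
    by (rule deg_preserving_diff_ad[OF dp x(2)])
  show ?thesis
    by unfold_locales (use sc E' dp' e0 e1 deg_preserving_vanish_on_L[OF sc E' dp'] in auto)
qed

subsection \<open>Even degree-preserving superderivations\<close>

lemma even_exists_ad_matching_L01:
  assumes sc: "s = 0 \<or> s = 1/2" and E: "superder s la False E" and dp: "deg_preserving s E"
  shows "\<exists>x. hom False x \<and> in_deg s 0 x \<and>
    E (bv (L 0)) = brk s la x (bv (L 0)) \<and> E (bv (L 1)) = brk s la x (bv (L 1))"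
proof -
  have decomp: "E (bv (L n)) = smul (E (bv (L n)) (L n)) (bv (L n)) + smul (E (bv (L n)) (I n)) (bv (I n))" for n
    using hom_even_in_deg_eq[where w="E (bv (L n))" and n=n] superder_hom[OF E hom_bv[of "L n"]]
      deg_preservingD[OF dp, of "L n"] by simp
  obtain z0 z1 where e0: "E (bv (L 0)) = smul z0 (bv (L 0)) + smul z1 (bv (I 0))" using decomp by blast
  obtain \<alpha> \<beta> where e1: "E (bv (L 1)) = smul \<alpha> (bv (L 1)) + smul \<beta> (bv (I 1))" using decomp by blast
  have rel: "E (bv (L 1)) = brk s la (E (bv (L 1))) (bv (L 0)) + brk s la (bv (L 1)) (E (bv (L 0)))"
    using superder_basis[OF E, of "L 1" "L 0"] by simp
  have z: "z0 = 0" "z1 = 0"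
    using fun_cong[OF rel[unfolded e0 e1], of "L 1"] fun_cong[OF rel[unfolded e0 e1], of "I 1"]
    by (simp_all add: brk_linear coeff_simps)
  define x where "x = smul (- \<alpha>) (bv (L 0)) + smul (- \<beta>) (bv (I 0))"
  have "hom False x" unfolding x_def using hom_bv[of "L 0"] hom_bv[of "I 0"]
    by (intro hom_add hom_smul) simp_all
  moreover have "in_deg s 0 x" by (auto simp: x_def in_deg_def coeff_simps split: if_splits)
  moreover have "E (bv (L 0)) = brk s la x (bv (L 0))" "E (bv (L 1)) = brk s la x (bv (L 1))"
    unfolding x_def e0 e1 z by (simp_all add: brk_linear fun_eq_iff coeff_simps)
  ultimately show ?thesis by blast
qed

locale normalized_even_der = normalized_der s la False E for s la E
begin

definition I_coeff :: complex where "I_coeff = E (bv (I 0)) (I 0)"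
definition H_coeff :: "int \<Rightarrow> complex" where "H_coeff k = E (bv (H k)) (H k)"
definition G_coeff :: "int \<Rightarrow> complex" where "G_coeff k = E (bv (G k)) (G k)"
definition GH_coeff :: "int \<Rightarrow> complex" where "GH_coeff k = E (bv (G k)) (H k)"

lemma E_I: "E (bv (I m)) = smul I_coeff (bv (I m))"
proof -
  define \<gamma> where "\<gamma> = E (bv (I 0)) (L 0)"
  have i0: "E (bv (I 0)) = smul \<gamma> (bv (L 0)) + smul I_coeff (bv (I 0))"
    unfolding \<gamma>_def I_coeff_def
    using hom_even_in_deg_eq[where n=0] hom_bv_image[of "I 0"] in_deg_bv_image[of "I 0"] by simp
  have iM: "E (bv (I m)) = smul \<gamma> (bv (L m)) + smul I_coeff (bv (I m))" for m
  proof (cases "m = 0")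
    case False
    have "smul (of_int m) (E (bv (I m))) = brk s la (bv (L m)) (E (bv (I 0)))"
      using L_rule[of m "I 0"] by (simp add: smul_bv)
    also have "\<dots> = smul (of_int m) (smul \<gamma> (bv (L m)) + smul I_coeff (bv (I m)))"
      unfolding i0 by (simp add: brk_linear fun_eq_iff coeff_simps)
    finally show ?thesis by (rule smul_left_cancel[rotated]) (simp add: False)
  qed (use i0 in simp)
  have "E (br s la (I 1) (I 0)) = brk s la (E (bv (I 1))) (bv (I 0)) + brk s la (bv (I 1)) (E (bv (I 0)))"
    using basis_rule[of "I 1" "I 0"] by simp
  then have "0 = brk s la (E (bv (I 1))) (bv (I 0)) + brk s la (bv (I 1)) (E (bv (I 0)))"
    by (simp add: zero)
  from fun_cong[OF this[unfolded iM], of "I 1"] have "\<gamma> = 0"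
    by (simp add: brk_linear coeff_simps zero_fun_apply)
  then show ?thesis using iM[of m] by simp
qed

lemma E_H: "E (bv (H k)) = smul (H_coeff k) (bv (H k))"
proof -
  define \<eta> where "\<eta> = E (bv (H k)) (G k)"
  have r: "E (bv (H k)) = smul \<eta> (bv (G k)) + smul (H_coeff k) (bv (H k))"
    unfolding \<eta>_def H_coeff_def using hom_odd_in_deg_eq hom_bv_image[of "H k"] in_deg_bv_image[of "H k"]
    by simp
  define m where "m = 2 * k + tws s + 1"
  have c: "of_int m - 2 * pv s k = 1" using two_pv[OF s_cases, of k] by (simp add: m_def)
  have "E (br s la (I m) (H k)) = brk s la (E (bv (I m))) (bv (H k)) + brk s la (bv (I m)) (E (bv (H k)))"
    using basis_rule[of "I m" "H k"] by simp
  then have "0 = brk s la (E (bv (I m))) (bv (H k)) + brk s la (bv (I m)) (E (bv (H k)))"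
    by (simp add: zero)
  from fun_cong[OF this[unfolded E_I, unfolded r], of "H (m + k)"] have "\<eta> = 0"
    using c by (simp add: brk_linear coeff_simps zero_fun_apply)
  then show ?thesis using r by simp
qed

lemma E_G: "E (bv (G k)) = smul (G_coeff k) (bv (G k)) + smul (GH_coeff k) (bv (H k))"
  unfolding G_coeff_def GH_coeff_def
  using hom_odd_in_deg_eq hom_bv_image[of "G k"] in_deg_bv_image[of "G k"] by simp

lemma I_coeff_eq: "I_coeff = 2 * G_coeff k"
proof -
  have "E (br s la (G k) (G k)) = brk s la (E (bv (G k))) (bv (G k)) + brk s la (bv (G k)) (E (bv (G k)))"
    using basis_rule[of "G k" "G k"] by simp
  from fun_cong[OF this[unfolded E_G], of "I (k + k + tws s)"] show ?thesis
    by (simp add: E_I brk_linear coeff_simps)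
qed

lemma I_G_relation: "(of_int m - 2 * pv s k) * H_coeff (m + k) = (of_int m - 2 * pv s k) * (I_coeff + G_coeff k)"
proof -
  have "E (br s la (I m) (G k)) = brk s la (E (bv (I m))) (bv (G k)) + brk s la (bv (I m)) (E (bv (G k)))"
    using basis_rule[of "I m" "G k"] by simp
  from fun_cong[OF this[unfolded E_I E_G], of "H (m + k)"] show ?thesis
    by (simp add: smul_bv E_H brk_linear coeff_simps algebra_simps)
qed

text \<open>Use \<open>[I\<^sub>0, G\<^sub>j]\<close>, or \<open>[I\<^sub>1, G\<^sub>j\<^sub>-\<^sub>1]\<close> when \<open>p = j + s\<close> vanishes.\<close>

lemma H_coeff_eq: "H_coeff j = 3 * G_coeff 0"
proof (cases "pv s j = 0")
  case False
  then have "H_coeff j = I_coeff + G_coeff j" using I_G_relation[of 0 j] by simp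
  then show ?thesis using I_coeff_eq[of j] I_coeff_eq[of 0] by simp
next
  case True
  have c3: "of_int 1 - 2 * pv s (j - 1) = 3" using True by (simp add: pv_def algebra_simps)
  have "3 * H_coeff (1 + (j - 1)) = 3 * (I_coeff + G_coeff (j - 1))"
    using I_G_relation[of 1 "j - 1"] unfolding c3 .
  then have "H_coeff j = I_coeff + G_coeff (j - 1)" by (simp del: distrib_left_numeral)
  then show ?thesis using I_coeff_eq[of "j - 1"] I_coeff_eq[of 0] by simp
qed

lemma G_coeff_eq: "G_coeff k = G_coeff 0"
  using I_coeff_eq[of k] I_coeff_eq[of 0] by simp

lemma L_G_relation:
  "(of_int m / 2 - pv s k) * GH_coeff (m + k) + la * (of_int m + 1) * H_coeff (m + k) =
    G_coeff k * (la * (of_int m + 1)) + GH_coeff k * (of_int m / 2 - pv s k)"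
  using fun_cong[OF L_rule[of m "G k", unfolded E_G], of "H (m + k)"]
  by (simp add: add_smul_bv E_H E_G brk_linear coeff_simps)

lemma la_G_coeff: "la * G_coeff 0 = 0"
  using L_G_relation[of 0 0] H_coeff_eq[of 0] by (simp add: algebra_simps)

lemma GH_coeff_step: assumes "m \<noteq> 2 * k + tws s" shows "GH_coeff (m + k) = GH_coeff k"
proof -
  have "la * H_coeff (m + k) = la * G_coeff k"
    using H_coeff_eq[of "m + k"] G_coeff_eq[of k] la_G_coeff by (cases "la = 0") simp_all
  then have "(of_int m / 2 - pv s k) * GH_coeff (m + k) = GH_coeff k * (of_int m / 2 - pv s k)"
    using L_G_relation[of m k] by (cases "la = 0") (simp_all add: field_simps)
  moreover have "of_int m / 2 - pv s k \<noteq> 0" using half_minus_pv_eq_0_iff[OF s_cases] assms by simp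
  ultimately show ?thesis by simp
qed

lemma GH_coeff_const: "GH_coeff j = GH_coeff 5"
proof (cases "j - 5 = 2 * 5 + tws s")
  case False then show ?thesis using GH_coeff_step[of "j - 5" 5] by simp
next
  case True
  have "GH_coeff ((j - 6) + 6) = GH_coeff 6" by (rule GH_coeff_step) (use True in simp)
  moreover have "GH_coeff (1 + 5) = GH_coeff 5" by (rule GH_coeff_step) (use tws_cases[OF s_cases] in auto)
  ultimately show ?thesis by simp
qed

lemma on_basis: "E (bv b) = smul (GH_coeff 5) (dG (bv b)) + smul (G_coeff 0) (dD (bv b))"
proof (cases b)
  case (L n) then show ?thesis by (simp add: vanish_on_L dG_bv dD_bv)
next
  case (I n) then show ?thesis using I_coeff_eq[of 0] by (simp add: E_I dG_bv dD_bv mult.commute)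
next
  case (G k) then show ?thesis
    using G_coeff_eq[of k] GH_coeff_const[of k] by (simp add: E_G dG_bv dD_bv smul_add ac_simps)
next
  case (H k) then show ?thesis using H_coeff_eq[of k] by (simp add: E_H dG_bv dD_bv mult.commute)
qed

end

lemma even_deg_preserving_classification:
  assumes sc: "s = 0 \<or> s = 1/2" and E: "superder s la False E" and dp: "deg_preserving s E"
  shows "\<exists>x \<alpha> \<beta>. hom False x \<and> (la \<noteq> 0 \<longrightarrow> \<beta> = 0) \<and>
    (\<forall>v\<in>V. E v = brk s la x v + smul \<alpha> (dG v) + smul \<beta> (dD v))"
proof -
  obtain x where x: "hom False x" "in_deg s 0 x"
    and e01: "E (bv (L 0)) = brk s la x (bv (L 0))" "E (bv (L 1)) = brk s la x (bv (L 1))"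
    using even_exists_ad_matching_L01[OF sc E dp] by blast
  interpret N: normalized_even_der s la "\<lambda>v. E v - brk s la x v"
    unfolding normalized_even_der_def by (rule normalized_derI[OF sc E dp x e01])
  have "E v - brk s la x v = smul (N.GH_coeff 5) (dG v) + smul (N.G_coeff 0) (dD v)" if "v \<in> V" for v
    using V_linear_eqI[OF N.linear V_linear_outer N.on_basis that] .
  then have "\<forall>v\<in>V. E v = brk s la x v + smul (N.GH_coeff 5) (dG v) + smul (N.G_coeff 0) (dD v)"
    by (auto simp: algebra_simps)
  then show ?thesis using x(1) N.la_G_coeff by force
qed

subsection \<open>Odd degree-preserving superderivations\<close>

lemma odd_deg_preserving_half:
  assumes t1: "tws s = 1" and E: "superder s la True E" and dp: "deg_preserving s E" and v: "v \<in> V"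
  shows "E v = 0"
proof -
  have "E (bv b) = 0" for b
    using superder_hom[OF E hom_bv[of b]] deg_preservingD[OF dp, of b]
      hom_odd_in_even_deg[OF _ _ t1] hom_even_in_odd_deg[of _ s] t1
    by (cases b) simp_all
  then show ?thesis using V_linear_eqI[OF superder_V_linear[OF E], of "\<lambda>_. 0"] v
    by (simp add: V_linear_def)
qed

lemma tws_0[simp]: "tws 0 = 0" by (simp add: tws_def)
lemma pv_0[simp]: "pv 0 k = of_int k" by (simp add: pv_def)

lemma odd_exists_ad_matching_L01:
  assumes E: "superder 0 la True E" and dp: "deg_preserving 0 E"
  shows "\<exists>x. hom True x \<and> in_deg 0 0 x \<and>
    E (bv (L 0)) = brk 0 la x (bv (L 0)) \<and> E (bv (L 1)) = brk 0 la x (bv (L 1))"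
proof -
  have decomp: "E (bv (L n)) = smul (E (bv (L n)) (G n)) (bv (G n)) + smul (E (bv (L n)) (H n)) (bv (H n))" for n
    using hom_odd_in_deg_eq[where w="E (bv (L n))" and s=0 and k=n] superder_hom[OF E hom_bv[of "L n"]]
      deg_preservingD[OF dp, of "L n"] by simp
  obtain z0 z1 where e0: "E (bv (L 0)) = smul z0 (bv (G 0)) + smul z1 (bv (H 0))" using decomp by blast
  obtain \<alpha> \<beta> where e1: "E (bv (L 1)) = smul \<alpha> (bv (G 1)) + smul \<beta> (bv (H 1))" using decomp by blast
  have rel: "E (bv (L 1)) = brk 0 la (E (bv (L 1))) (bv (L 0)) + brk 0 la (bv (L 1)) (E (bv (L 0)))"
    using superder_basis[OF E, of "L 1" "L 0"] by simp
  have z0: "z0 = 0" using fun_cong[OF rel[unfolded e0 e1], of "G 1"] by (simp add: brk_linear coeff_simps)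
  have z1: "z1 = 2 * la * \<alpha>"
    using fun_cong[OF rel[unfolded e0 e1], of "H 1"] z0 by (simp add: brk_linear coeff_simps field_simps)
  define x where "x = smul (-2 * \<alpha>) (bv (G 0)) + smul (8 * la * \<alpha> - 2 * \<beta>) (bv (H 0))"
  have "hom True x" unfolding x_def using hom_bv[of "G 0"] hom_bv[of "H 0"]
    by (intro hom_add hom_smul) simp_all
  moreover have "in_deg 0 0 x" by (auto simp: x_def in_deg_def coeff_simps split: if_splits)
  moreover have "E (bv (L 0)) = brk 0 la x (bv (L 0))" "E (bv (L 1)) = brk 0 la x (bv (L 1))"
    unfolding x_def e0 e1 z0 z1 by (simp_all add: brk_linear fun_eq_iff coeff_simps field_simps)
  ultimately show ?thesis by blast
qed

locale normalized_odd_der = normalized_der 0 la True E for la E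
begin

lemma E_I: "E (bv (I m)) = 0"
proof -
  obtain \<gamma> \<delta> where i0: "E (bv (I 0)) = smul \<gamma> (bv (G 0)) + smul \<delta> (bv (H 0))"
    using hom_odd_in_deg_eq[where s=0 and k=0] hom_bv_image[of "I 0"] in_deg_bv_image[of "I 0"] by force
  have i1: "E (bv (I 1)) = brk 0 la (bv (L 1)) (E (bv (I 0)))" using L_rule[of 1 "I 0"] by simp
  have "smul (-2) (E (bv (I 0))) = brk 0 la (bv (L (-1))) (E (bv (I 1)))"
    using L_rule[of "-1" "I 1"] by (simp add: smul_bv)
  note rel = this[unfolded i1, unfolded i0]
  have "\<gamma> = 0" using fun_cong[OF rel, of "G 0"] by (simp add: brk_linear coeff_simps field_simps)
  moreover have "\<delta> = 0"
    using fun_cong[OF rel, of "H 0"] calculation by (simp add: brk_linear coeff_simps field_simps)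
  ultimately have I0: "E (bv (I 0)) = 0" using i0 by simp
  show ?thesis
  proof (cases "m = 0")
    case False
    have "smul (of_int m) (E (bv (I m))) = 0" using L_rule[of m "I 0"] I0 by (simp add: smul_bv)
    then show ?thesis by (rule smul_eq_0_cancel[rotated]) (simp add: False)
  qed (use I0 in simp)
qed

lemma E_H: "E (bv (H m)) = 0"
proof -
  obtain \<eta> \<theta> where h0: "E (bv (H 0)) = smul \<eta> (bv (L 0)) + smul \<theta> (bv (I 0))"
    using hom_even_in_deg_eq[where s=0 and n=0] hom_bv_image[of "H 0"] in_deg_bv_image[of "H 0"] by force
  have "smul (1/2) (E (bv (H 1))) = brk 0 la (bv (L 1)) (E (bv (H 0)))"
    using L_rule[of 1 "H 0"] by (simp add: smul_bv)
  then have h1: "E (bv (H 1)) = smul 2 (brk 0 la (bv (L 1)) (E (bv (H 0))))"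
    by (drule_tac smul_eq_imp_eq_inverse[rotated]) simp_all
  have "smul (-3/2) (E (bv (H 0))) = brk 0 la (bv (L (-1))) (E (bv (H 1)))"
    using L_rule[of "-1" "H 1"] by (simp add: smul_bv)
  note rel = this[unfolded h1, unfolded h0]
  have "\<eta> = 0" "\<theta> = 0"
    using fun_cong[OF rel, of "L 0"] fun_cong[OF rel, of "I 0"] by (simp_all add: brk_linear coeff_simps field_simps)
  then have H0: "E (bv (H 0)) = 0" using h0 by simp
  show ?thesis
  proof (cases "m = 0")
    case False
    have "smul (of_int m / 2) (E (bv (H m))) = 0" using L_rule[of m "H 0"] H0 by (simp add: smul_bv)
    then show ?thesis by (rule smul_eq_0_cancel[rotated]) (simp add: False)
  qed (use H0 in simp)
qed

lemma E_G: "E (bv (G m)) = 0"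
proof -
  obtain \<epsilon> \<zeta> where g0: "E (bv (G 0)) = smul \<epsilon> (bv (L 0)) + smul \<zeta> (bv (I 0))"
    using hom_even_in_deg_eq[where s=0 and n=0] hom_bv_image[of "G 0"] in_deg_bv_image[of "G 0"] by force
  have "smul (1/2) (E (bv (G 1))) = brk 0 la (bv (L 1)) (E (bv (G 0)))"
    using L_rule[of 1 "G 0"] by (simp add: add_smul_bv smul_bv E_H)
  then have g1: "E (bv (G 1)) = smul 2 (brk 0 la (bv (L 1)) (E (bv (G 0))))"
    by (drule_tac smul_eq_imp_eq_inverse[rotated]) simp_all
  have "smul (-3/2) (E (bv (G 0))) = brk 0 la (bv (L (-1))) (E (bv (G 1)))"
    using L_rule[of "-1" "G 1"] by (simp add: add_smul_bv smul_bv E_H)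
  note rel = this[unfolded g1, unfolded g0]
  have "\<epsilon> = 0" "\<zeta> = 0"
    using fun_cong[OF rel, of "L 0"] fun_cong[OF rel, of "I 0"] by (simp_all add: brk_linear coeff_simps field_simps)
  then have G0: "E (bv (G 0)) = 0" using g0 by simp
  show ?thesis
  proof (cases "m = 0")
    case False
    have "smul (of_int m / 2) (E (bv (G m))) = 0" using L_rule[of m "G 0"] G0 by (simp add: add_smul_bv smul_bv E_H)
    then show ?thesis by (rule smul_eq_0_cancel[rotated]) (simp add: False)
  qed (use G0 in simp)
qed

lemma vanish: "v \<in> V \<Longrightarrow> E v = 0"
proof -
  have "E (bv b) = 0" for b by (cases b) (simp_all add: vanish_on_L E_I E_H E_G)
  then show "v \<in> V \<Longrightarrow> E v = 0"
    using V_linear_eqI[OF linear, of "\<lambda>_. 0"] by (simp add: V_linear_def)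
qed

end

lemma odd_deg_preserving_classification:
  assumes sc: "s = 0 \<or> s = 1/2" and E: "superder s la True E" and dp: "deg_preserving s E"
  shows "\<exists>x. hom True x \<and> (\<forall>v\<in>V. E v = brk s la x v)"
proof (cases "s = 0")
  case True
  obtain x where x: "hom True x" "in_deg 0 0 x"
    and e01: "E (bv (L 0)) = brk 0 la x (bv (L 0))" "E (bv (L 1)) = brk 0 la x (bv (L 1))"
    using odd_exists_ad_matching_L01 E dp True by blast
  interpret N: normalized_odd_der la "\<lambda>v. E v - brk 0 la x v"
    unfolding normalized_odd_der_def by (rule normalized_derI) (use E dp True x e01 in simp_all)
  show ?thesis using N.vanish x(1) True by (intro exI[of _ x]) (simp add: vec_simps fun_eq_iff)
next
  case False
  then have "tws s = 1" using tws_cases[OF sc] by auto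
  then show ?thesis
    using odd_deg_preserving_half[OF _ E dp] by (intro exI[of _ 0]) (auto simp: hom_iff zero_fun_apply)
qed

lemma superder_classification:
  assumes sc: "s = 0 \<or> s = 1/2" and D: "superder s la a D"
  shows "\<exists>x\<in>V. \<exists>\<alpha> \<beta>. (la \<noteq> 0 \<longrightarrow> \<beta> = 0) \<and> (a \<longrightarrow> \<alpha> = 0 \<and> \<beta> = 0) \<and>
           (\<forall>v\<in>V. D v = brk s la x v + smul \<alpha> (dG v) + smul \<beta> (dD v))"
proof -
  obtain x where x: "hom a x" and D': "superder s la a (\<lambda>v. D v - brk s la x v)"
    and dp: "deg_preserving s (\<lambda>v. D v - brk s la x v)"
    using exists_ad_deg_preserving[OF sc D] by blast
  obtain x' \<alpha> \<beta> where x': "hom a x'" and \<beta>: "la \<noteq> 0 \<longrightarrow> \<beta> = 0" and \<alpha>\<beta>: "a \<longrightarrow> \<alpha> = 0 \<and> \<beta> = 0"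
    and eq: "\<forall>v\<in>V. D v - brk s la x v = brk s la x' v + smul \<alpha> (dG v) + smul \<beta> (dD v)"
  proof (cases a)
    case False
    then have "superder s la False (\<lambda>v. D v - brk s la x v)" using D' by simp
    from even_deg_preserving_classification[OF sc this dp] show thesis using that False by auto
  next
    case True
    then have "superder s la True (\<lambda>v. D v - brk s la x v)" using D' by simp
    from odd_deg_preserving_classification[OF sc this dp] show thesis using that[of _ 0 0] True by auto
  qed
  have "D v = brk s la (x' + x) v + smul \<alpha> (dG v) + smul \<beta> (dD v)" if "v \<in> V" for v
    using eq that by (simp add: brk_add_left[OF hom_V[OF x'] hom_V[OF x]] algebra_simps)
  then show ?thesis using x x' \<beta> \<alpha>\<beta> by (intro bexI[of _ "x' + x"]) (auto simp: hom_V)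
qed

lemma is_der_imp_ad_plus_outer:
  assumes sc: "s = 0 \<or> s = 1/2" and "is_der s la D"
  shows "\<exists>x\<in>V. \<exists>a b. (la \<noteq> 0 \<longrightarrow> b = 0) \<and> (\<forall>v\<in>V. D v = ad s la x v + smul a (dG v) + smul b (dD v))"
proof -
  obtain D0 D1 where D0: "superder s la False D0" and D1: "superder s la True D1"
    and D: "\<forall>v\<in>V. D v = D0 v + D1 v" using assms(2) unfolding is_der_def by blast
  obtain x0 \<alpha> \<beta> where x0: "x0 \<in> V" and \<beta>: "la \<noteq> 0 \<longrightarrow> \<beta> = 0"
    and e0: "\<forall>v\<in>V. D0 v = brk s la x0 v + smul \<alpha> (dG v) + smul \<beta> (dD v)"
    using superder_classification[OF sc D0] by blast
  obtain x1 where x1: "x1 \<in> V" and e1: "\<forall>v\<in>V. D1 v = brk s la x1 v"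
    using superder_classification[OF sc D1] by force
  have "\<forall>v\<in>V. D v = ad s la (x0 + x1) v + smul \<alpha> (dG v) + smul \<beta> (dD v)"
    using D e0 e1 by (simp add: ad_def brk_add_left[OF x0 x1] ac_simps)
  then show ?thesis using \<beta> x0 x1 by (intro bexI[of _ "x0 + x1"]) auto
qed

lemma is_der_if_ad_plus_outer:
  assumes sc: "s = 0 \<or> s = 1/2" and x: "x \<in> V" and b: "la \<noteq> 0 \<longrightarrow> b = 0"
    and D: "\<forall>v\<in>V. D v = ad s la x v + smul a (dG v) + smul b (dD v)"
  shows "is_der s la D"
proof -
  have "superder s la False (\<lambda>v. smul b (dD v))"
  proof (cases "la = 0")
    case False
    then show ?thesis using b superder_smul[OF superder_dG, of s la 0] by simp
  qed (simp add: superder_smul superder_dD)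
  then have D0: "superder s la False (\<lambda>v. brk s la (even_part x) v + smul a (dG v) + smul b (dD v))"
    using superder_ad[OF of_int_tws[OF sc] hom_even_part[OF x]] superder_smul[OF superder_dG]
    by (intro superder_add)
  have D1: "superder s la True (brk s la (odd_part x))"
    by (rule superder_ad[OF of_int_tws[OF sc] hom_odd_part[OF x]])
  have "brk s la x v = brk s la (even_part x) v + brk s la (odd_part x) v" for v
    using brk_add_left[OF hom_V[OF hom_even_part[OF x]] hom_V[OF hom_odd_part[OF x]]]
    by (simp add: even_part_add_odd_part)
  then show ?thesis unfolding is_der_def using D D0 D1
    by (intro exI[of _ "\<lambda>v. brk s la (even_part x) v + smul a (dG v) + smul b (dD v)"]
        exI[of _ "brk s la (odd_part x)"]) (simp add: ad_def ac_simps)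
qed

lemma ad_plus_outer_eq_0:
  assumes sc: "s = 0 \<or> s = 1/2" and x: "x \<in> V"
    and z: "\<forall>v\<in>V. ad s la x v + smul a (dG v) + smul b (dD v) = 0"
  shows "x = 0 \<and> a = 0 \<and> b = 0"
proof -
  have "brk s la x (bv (L m)) = 0" for m
    using z[rule_format, OF bv_V[of "L m"]] by (simp add: ad_def dG_bv dD_bv)
  then have x0: "x = 0" by (rule centralizer_of_L_trivial[OF sc x])
  then have "smul a (bv (H 0)) + smul b (bv (G 0)) = 0"
    using z[rule_format, OF bv_V[of "G 0"]] by (simp add: ad_def dG_bv dD_bv)
  from fun_cong[OF this, of "H 0"] fun_cong[OF this, of "G 0"] have "a = 0" "b = 0"
    by (simp_all add: coeff_simps)
  with x0 show ?thesis by simp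
qed

theorem theorem2p1:
  fixes s :: real and la :: complex
  assumes "s = 0 \<or> s = 1/2"
  shows "(\<forall>D. is_der s la D \<longleftrightarrow>
            (\<exists>x\<in>V. \<exists>a b. (la \<noteq> 0 \<longrightarrow> b = 0) \<and>
               (\<forall>v\<in>V. D v = ad s la x v + smul a (dG v) + smul b (dD v))))
       \<and> (\<forall>x\<in>V. \<forall>a b. (la \<noteq> 0 \<longrightarrow> b = 0) \<and>
               (\<forall>v\<in>V. ad s la x v + smul a (dG v) + smul b (dD v) = 0)
             \<longrightarrow> (\<forall>v\<in>V. ad s la x v = 0) \<and> a = 0 \<and> b = 0)"
proof -
  have indep: "(\<forall>v\<in>V. ad s la x v = 0) \<and> a = 0 \<and> b = 0"
    if "x \<in> V" "\<forall>v\<in>V. ad s la x v + smul a (dG v) + smul b (dD v) = 0" for x a b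
    using ad_plus_outer_eq_0[OF assms that] by (simp add: ad_def)
  show ?thesis
    using is_der_imp_ad_plus_outer[OF assms] is_der_if_ad_plus_outer[OF assms] indep by blast
qed

end
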